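(* For every three-qubit state $\rho_{ABC}$ (pure or mixed), at most two of the three numbers $S_{AB}, S_{AC}, S_{BC}$ exceed $1$; that is, at most two of the three two-qubit reduced states violate the three-settings CJWR linear steering inequality. Moreover, steering can be non-monogamous in this scenario: there exists a three-qubit state for which two of the reduced states violate the three-settings CJWR linear steering inequality (two of $S_{AB}, S_{AC}, S_{BC}$ exceed $1$).
   Context: For a two-qubit state $\rho$ let $T=[t_{kl}]$ with $t_{kl}=\mathrm{Tr}[\rho\,\sigma_k\otimes\sigma_l]$ ($k,l\in\{1,2,3\}$, $\sigma_k$ the Pauli matrices) be its correlation matrix and $S(\rho)=\mathrm{Tr}[T^{T}T]=\sum_{k,l}t_{kl}^2$. For a three-qubit state $\rho_{ABC}$, $\rho_{AB},\rho_{AC},\rho_{BC}$ denote its two-qubit reduced states and $S_{ij}=S(\rho_{ij})$. The three-settings CJWR linear steering inequality for a two-qubit state $\rho$ reads $F_3(\rho,\mu)=\frac{1}{\sqrt3}\left|\sum_{k=1}^{3}\langle A_k\otimes B_k\rangle\right|\le 1$, where $A_k=\hat a_k\cdot\vec\sigma$ with unit vectors $\hat a_k\in\mathbb R^3$, $B_k=\hat b_k\cdot\vec\sigma$ with orthonormal vectors $\hat b_k\in\mathbb R^3$, $\mu$ the set of these directions, and $\langle X\rangle=\mathrm{Tr}[\rho X]$. Its maximum over all measurement settings $\mu$ equals $\sqrt{S(\rho)}$, so $\rho$ violates the inequality (is "$F_3$ steerable") if and only if $S(\rho)>1$. *)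

theory Defs
  imports Complex_Main
begin

text \<open>Qubit basis indexed by bool (False = |0>, True = |1>).
  Operators on a finite Hilbert space with basis type 'a are matrices 'a => 'a => complex.\<close>

type_synonym 'a op = "'a \<Rightarrow> 'a \<Rightarrow> complex"

definition hermitian :: "('a::finite) op \<Rightarrow> bool" where
  "hermitian M \<longleftrightarrow> (\<forall>i j. M j i = cnj (M i j))"

definition psd :: "('a::finite) op \<Rightarrow> bool" where
  "psd M \<longleftrightarrow> hermitian M \<and>
     (\<forall>v :: 'a \<Rightarrow> complex. 0 \<le> Re (\<Sum>i\<in>UNIV. \<Sum>j\<in>UNIV. cnj (v i) * M i j * v j))"

definition trace :: "('a::finite) op \<Rightarrow> complex" where
  "trace M = (\<Sum>i\<in>UNIV. M i i)"

definition density :: "('a::finite) op \<Rightarrow> bool" where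
  "density M \<longleftrightarrow> psd M \<and> trace M = 1"

definition pauli :: "nat \<Rightarrow> bool op" where
  "pauli k = (\<lambda>i j.
     if k = 1 then (if i \<noteq> j then 1 else 0)
     else if k = 2 then (if \<not> i \<and> j then - \<i> else if i \<and> \<not> j then \<i> else 0)
     else if k = 3 then (if i = j then (if i then -1 else 1) else 0)
     else 0)"

definition tensor :: "('a::finite) op \<Rightarrow> ('b::finite) op \<Rightarrow> ('a \<times> 'b) op" where
  "tensor A B = (\<lambda>(i1, i2) (j1, j2). A i1 j1 * B i2 j2)"

definition mprod :: "('a::finite) op \<Rightarrow> 'a op \<Rightarrow> 'a op" where
  "mprod A B = (\<lambda>i k. \<Sum>j\<in>UNIV. A i j * B j k)"

text \<open>Correlation matrix entries t_kl = Tr[rho (sigma_k (x) sigma_l)] (real for Hermitian rho).\<close>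
definition corr :: "(bool \<times> bool) op \<Rightarrow> nat \<Rightarrow> nat \<Rightarrow> real" where
  "corr \<rho> k l = Re (trace (mprod \<rho> (tensor (pauli k) (pauli l))))"

text \<open>S(rho) = Tr[T^T T] = sum of squares of the t_kl.\<close>
definition S :: "(bool \<times> bool) op \<Rightarrow> real" where
  "S \<rho> = (\<Sum>k\<in>{1,2,3}. \<Sum>l\<in>{1,2,3}. (corr \<rho> k l)\<^sup>2)"

definition red_AB :: "(bool \<times> bool \<times> bool) op \<Rightarrow> (bool \<times> bool) op" where
  "red_AB \<rho> = (\<lambda>(a, b) (a', b'). \<Sum>c\<in>UNIV. \<rho> (a, b, c) (a', b', c))"

definition red_AC :: "(bool \<times> bool \<times> bool) op \<Rightarrow> (bool \<times> bool) op" where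
  "red_AC \<rho> = (\<lambda>(a, c) (a', c'). \<Sum>b\<in>UNIV. \<rho> (a, b, c) (a', b, c'))"

definition red_BC :: "(bool \<times> bool \<times> bool) op \<Rightarrow> (bool \<times> bool) op" where
  "red_BC \<rho> = (\<lambda>(b, c) (b', c'). \<Sum>a\<in>UNIV. \<rho> (a, b, c) (a, b', c'))"

end

theory Submission
  imports Defs "HOL-Analysis.L2_Norm"
begin

(* The 27 two-body correlations of rho_AB, rho_AC, rho_BC form a real vector that depends
   linearly on rho and whose squared Euclidean length is S_AB + S_AC + S_BC.  For an
   unnormalised pure state |u><u| this squared length is exactly 3 <u|u>^2.  A mixed state is a
   sum of such rank-one terms with sum of <u|u> equal to 1, so by the triangle inequality the
   length is at most sqrt 3, i.e. S_AB + S_AC + S_BC <= 3, and the three numbers cannot all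
   exceed 1.  The state (|011> + |101> + 2|110>)/sqrt 6 has S_AC = S_BC = 4/3. *)

definition outer :: "('a::finite \<Rightarrow> complex) \<Rightarrow> 'a op" where
  "outer u = (\<lambda>i j. u i * cnj (u j))"

definition qform :: "('a::finite) op \<Rightarrow> ('a \<Rightarrow> complex) \<Rightarrow> complex" where
  "qform M v = (\<Sum>i\<in>UNIV. \<Sum>j\<in>UNIV. cnj (v i) * M i j * v j)"

lemma psd_iff_qform: "psd M \<longleftrightarrow> hermitian M \<and> (\<forall>v. 0 \<le> Re (qform M v))"
  unfolding psd_def qform_def by simp

lemma sum_if_const_cond: "(\<Sum>j\<in>A. if P then f j else 0) = (if P then sum f A else 0)"
  by simp

lemma qform_delta: "qform M (\<lambda>i. if i = a then 1 else 0) = M a a"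
  unfolding qform_def
  by (simp add: sum_if_const_cond if_distrib[of "\<lambda>x. x * _"]
      if_distrib[of "\<lambda>x. _ * x"] if_distrib[of cnj] cong: if_cong)

lemma qform_add_delta:
  fixes M :: "('a::finite) op"
  shows "qform M (\<lambda>i. v i + (if i = a then s else 0)) =
    qform M v + cnj s * (\<Sum>j\<in>UNIV. M a j * v j)
     + s * (\<Sum>i\<in>UNIV. cnj (v i) * M i a) + cnj s * s * M a a"
  unfolding qform_def
  by (simp add: algebra_simps sum.distrib sum_distrib_left sum_if_const_cond
      if_distrib[of "\<lambda>x. x * _"] if_distrib[of "\<lambda>x. _ * x"] if_distrib[of cnj] cong: if_cong)

lemma qform_diff: "qform (\<lambda>i j. M i j - N i j) v = qform M v - qform N v"
  unfolding qform_def by (simp add: algebra_simps sum_subtractf)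

lemma qform_outer:
  "qform (outer u) v = (\<Sum>i\<in>UNIV. cnj (v i) * u i) * cnj (\<Sum>i\<in>UNIV. cnj (v i) * u i)"
  unfolding qform_def outer_def by (simp add: sum_product algebra_simps)

lemma hermitian_outer: "hermitian (outer u)"
  unfolding hermitian_def outer_def by (simp add: mult.commute)

lemma hermitian_diff: "hermitian M \<Longrightarrow> hermitian N \<Longrightarrow> hermitian (\<lambda>i j. M i j - N i j)"
  unfolding hermitian_def by (metis complex_cnj_diff)

lemma psd_outer: "psd (outer u)"
  unfolding psd_iff_qform qform_outer complex_norm_square[symmetric] by (simp add: hermitian_outer)

lemma qform_div: "qform (\<lambda>i j. M i j / c) v = qform M v / c"
  unfolding qform_def by (simp add: sum_divide_distrib)

lemma psd_div:
  assumes "psd M" and "0 < c"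
  shows "psd (\<lambda>i j. M i j / complex_of_real c)"
proof -
  have "hermitian (\<lambda>i j. M i j / complex_of_real c)"
    using assms(1) unfolding psd_def hermitian_def
    by (metis complex_cnj_divide complex_cnj_complex_of_real)
  then show ?thesis
    using assms unfolding psd_iff_qform qform_div Re_divide_of_real by simp
qed

lemma hermitian_col_sum:
  assumes "hermitian M"
  shows "(\<Sum>i\<in>UNIV. cnj (v i) * M i a) = cnj (\<Sum>j\<in>UNIV. M a j * v j)"
proof -
  have "\<And>i. M i a = cnj (M a i)" using assms unfolding hermitian_def by blast
  then show ?thesis by (simp add: mult.commute)
qed

lemma psd_diag_real: "psd M \<Longrightarrow> M a a = complex_of_real (Re (M a a))"
  unfolding psd_def hermitian_def by (metis Reals_cnj_iff complex_is_Real_iff of_real_Re)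

lemma psd_diag_nonneg: "psd M \<Longrightarrow> 0 \<le> Re (M a a)"
  using qform_delta[of M a] unfolding psd_iff_qform by metis

lemma psd_zero_diag_row:
  assumes psd: "psd M" and zero: "M a a = 0"
  shows "M a j = 0"
proof (rule ccontr)
  assume nz: "M a j \<noteq> 0"
  define m where "m = M a j"
  define e where "e = (\<lambda>i. if i = j then (1::complex) else 0)"
  define t where "t = (Re (M j j) + 1) / (2 * (cmod m)\<^sup>2)"
  define s where "s = - complex_of_real t * m"
  have row: "(\<Sum>k\<in>UNIV. M a k * e k) = m"
    unfolding e_def m_def by (simp add: if_distrib cong: if_cong)
  have col: "(\<Sum>i\<in>UNIV. cnj (e i) * M i a) = cnj m"
    using hermitian_col_sum[of M e a] psd row unfolding psd_def by simp
  \<comment> \<open>the test vector e_j - t m e_a makes the quadratic form equal to -1\<close>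
  have "qform M (\<lambda>i. e i + (if i = a then s else 0)) = M j j - 2 * complex_of_real t * (m * cnj m)"
    using qform_add_delta[of M e a s] row col zero qform_delta[of M j]
    unfolding s_def e_def by (simp add: algebra_simps)
  then have "Re (qform M (\<lambda>i. e i + (if i = a then s else 0))) = Re (M j j) - 2 * t * (cmod m)\<^sup>2"
    by (simp add: complex_mult_cnj cmod_power2)
  also have "\<dots> = -1"
    using nz unfolding t_def m_def by (simp add: field_simps)
  finally show False
    using psd unfolding psd_iff_qform by (metis neg_0_le_iff_le not_one_le_zero)
qed

definition pivot :: "('a::finite) op \<Rightarrow> 'a \<Rightarrow> 'a \<Rightarrow> complex" where
  "pivot M a = (\<lambda>i. M i a / complex_of_real (sqrt (Re (M a a))))"

lemma outer_pivot:
  assumes psd: "psd M" and pos: "0 < Re (M a a)"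
  shows "outer (pivot M a) a j = M a j" "outer (pivot M a) i a = M i a"
proof -
  define d where "d = Re (M a a)"
  have sq: "complex_of_real (sqrt d) * complex_of_real (sqrt d) = complex_of_real d"
    using pos unfolding d_def by (simp flip: of_real_mult)
  have Maa: "M a a = complex_of_real d"
    using psd_diag_real[OF psd] unfolding d_def .
  have herm: "M a j = cnj (M j a)"
    using psd unfolding psd_def hermitian_def by metis
  show "outer (pivot M a) a j = M a j" "outer (pivot M a) i a = M i a"
    unfolding outer_def pivot_def d_def[symmetric] using pos[folded d_def]
    by (simp_all add: sq Maa herm)
qed

lemma psd_schur_complement:
  assumes psd: "psd M" and pos: "0 < Re (M a a)"
  shows "psd (\<lambda>i j. M i j - outer (pivot M a) i j)"
proof -
  define d where "d = Re (M a a)"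
  have herm: "hermitian M" using psd unfolding psd_def by blast
  have d0: "complex_of_real d \<noteq> 0" using pos unfolding d_def by simp
  have sq: "complex_of_real (sqrt d) * complex_of_real (sqrt d) = complex_of_real d"
    using pos unfolding d_def by (simp flip: of_real_mult)
  have Maa: "M a a = complex_of_real d"
    using psd_diag_real[OF psd] unfolding d_def .
  have "hermitian (\<lambda>i j. M i j - outer (pivot M a) i j)"
    using hermitian_diff[OF herm hermitian_outer] .
  moreover have "0 \<le> Re (qform (\<lambda>i j. M i j - outer (pivot M a) i j) v)" for v
  proof -
    define m where "m = (\<Sum>j\<in>UNIV. M a j * v j)"
    define s where "s = - m / complex_of_real d"
    have col: "(\<Sum>i\<in>UNIV. cnj (v i) * M i a) = cnj m"
      using hermitian_col_sum[OF herm] unfolding m_def .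
    have "(\<Sum>i\<in>UNIV. cnj (v i) * pivot M a i) = cnj m / complex_of_real (sqrt d)"
      unfolding pivot_def d_def[symmetric] col[symmetric] by (simp add: sum_divide_distrib)
    then have "qform (\<lambda>i j. M i j - outer (pivot M a) i j) v =
        qform M v - cnj m * m / complex_of_real d"
      unfolding qform_diff qform_outer by (simp add: sq)
    \<comment> \<open>completing the square in the a-th coordinate\<close>
    also have "\<dots> = qform M (\<lambda>i. v i + (if i = a then s else 0))"
      unfolding qform_add_delta m_def[symmetric] col Maa s_def
      using d0 by (simp add: field_simps)
    finally show ?thesis using psd unfolding psd_iff_qform by metis
  qed
  ultimately show ?thesis unfolding psd_iff_qform by blast
qed

lemma psd_eq_sum_outer_supported:
  fixes M :: "('a::finite) op"
  assumes "psd M" and "\<And>i j. i \<notin> A \<or> j \<notin> A \<Longrightarrow> M i j = 0"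
  shows "\<exists>us. M = (\<lambda>i j. \<Sum>u\<leftarrow>us. outer u i j)"
  using finite[of A] assms
proof (induction A arbitrary: M rule: finite_induct)
  case empty
  then have "M = (\<lambda>i j. 0)" by auto
  then show ?case by (intro exI[of _ "[]"]) simp
next
  case (insert a A M)
  have herm: "\<And>i j. M j i = cnj (M i j)"
    using insert.prems(1) unfolding psd_def hermitian_def by blast
  show ?case
  proof (cases "Re (M a a) = 0")
    case True
    then have "M a a = 0" using psd_diag_real[OF insert.prems(1), of a] by simp
    then have row: "M a j = 0" and col: "M j a = 0" for j
      using psd_zero_diag_row[OF insert.prems(1)] herm[of a j] by simp_all
    have "M i j = 0" if "i \<notin> A \<or> j \<notin> A" for i j
      using insert.prems(2)[of i j] row[of j] col[of i] that by blast
    then show ?thesis using insert.IH[OF insert.prems(1)] by blast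
  next
    case False
    then have pos: "0 < Re (M a a)" using psd_diag_nonneg[OF insert.prems(1), of a] by simp
    define M' where "M' = (\<lambda>i j. M i j - outer (pivot M a) i j)"
    have "M' i j = 0" if "i \<notin> A \<or> j \<notin> A" for i j
    proof (cases "i = a \<or> j = a")
      case True
      then show ?thesis using outer_pivot[OF insert.prems(1) pos] unfolding M'_def by auto
    next
      case False
      then have "i \<notin> insert a A \<or> j \<notin> insert a A" using that by blast
      then show ?thesis using insert.prems(2) unfolding M'_def outer_def pivot_def by auto
    qed
    then obtain us where "M' = (\<lambda>i j. \<Sum>u\<leftarrow>us. outer u i j)"
      using insert.IH psd_schur_complement[OF insert.prems(1) pos] unfolding M'_def by blast
    then have "M = (\<lambda>i j. \<Sum>u\<leftarrow>pivot M a # us. outer u i j)"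
      unfolding M'_def by (simp add: fun_eq_iff algebra_simps)
    then show ?thesis by blast
  qed
qed

lemma psd_eq_sum_outer:
  "psd (M :: ('a::finite) op) \<Longrightarrow> \<exists>us. M = (\<lambda>i j. \<Sum>u\<leftarrow>us. outer u i j)"
  using psd_eq_sum_outer_supported[of M UNIV] by simp

definition sqnorm :: "('a::finite \<Rightarrow> complex) \<Rightarrow> real" where
  "sqnorm u = (\<Sum>i\<in>UNIV. (cmod (u i))\<^sup>2)"

lemma trace_outer: "trace (outer u) = complex_of_real (sqnorm u)"
  unfolding trace_def outer_def sqnorm_def of_real_sum by (simp only: complex_norm_square)

lemma trace_sum_list: "trace (\<lambda>i j. \<Sum>u\<leftarrow>us. f u i j) = (\<Sum>u\<leftarrow>us. trace (f u))"
  by (induction us) (simp_all add: trace_def sum.distrib)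

lemma corr_sum_list: "corr (\<lambda>i j. \<Sum>u\<leftarrow>us. f u i j) k l = (\<Sum>u\<leftarrow>us. corr (f u) k l)"
  by (induction us) (simp_all add: corr_def trace_def mprod_def distrib_right sum.distrib)

lemma red_sum_list:
  "red_AB (\<lambda>i j. \<Sum>u\<leftarrow>us. f u i j) = (\<lambda>i j. \<Sum>u\<leftarrow>us. red_AB (f u) i j)"
  "red_AC (\<lambda>i j. \<Sum>u\<leftarrow>us. f u i j) = (\<lambda>i j. \<Sum>u\<leftarrow>us. red_AC (f u) i j)"
  "red_BC (\<lambda>i j. \<Sum>u\<leftarrow>us. f u i j) = (\<lambda>i j. \<Sum>u\<leftarrow>us. red_BC (f u) i j)"
  by (induction us) (auto simp: red_AB_def red_AC_def red_BC_def fun_eq_iff sum.distrib)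

definition corr_vec :: "(bool \<times> bool \<times> bool) op \<Rightarrow> nat \<times> nat \<times> nat \<Rightarrow> real" where
  "corr_vec \<rho> = (\<lambda>(p, k, l).
     corr (case p of 0 \<Rightarrow> red_AB \<rho> | Suc 0 \<Rightarrow> red_AC \<rho> | _ \<Rightarrow> red_BC \<rho>) k l)"

definition corr_index :: "(nat \<times> nat \<times> nat) set" where
  "corr_index = {0, 1, 2} \<times> {1, 2, 3} \<times> {1, 2, 3}"

lemma S_sum_eq_L2_set_corr_vec:
  "S (red_AB \<rho>) + S (red_AC \<rho>) + S (red_BC \<rho>) = (L2_set (corr_vec \<rho>) corr_index)\<^sup>2"
  unfolding L2_set_def corr_index_def corr_vec_def S_def
  by (simp add: sum_nonneg sum.cartesian_product[symmetric])

lemma corr_vec_sum_list: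
  "corr_vec (\<lambda>i j. \<Sum>u\<leftarrow>us. f u i j) x = (\<Sum>u\<leftarrow>us. corr_vec (f u) x)"
  unfolding corr_vec_def
  by (cases x) (simp add: red_sum_list corr_sum_list split: nat.split)

lemma UNIV_bool_pair:
  "(UNIV :: (bool \<times> bool) set) = {(False, False), (False, True), (True, False), (True, True)}"
  by auto

lemma UNIV_bool_triple: "(UNIV :: (bool \<times> bool \<times> bool) set) =
  {(False, False, False), (False, False, True), (False, True, False), (False, True, True),
   (True, False, False), (True, False, True), (True, True, False), (True, True, True)}"
  by auto

lemma S_sum_outer:
  "S (red_AB (outer u)) + S (red_AC (outer u)) + S (red_BC (outer u)) = 3 * (sqnorm u)\<^sup>2"
  unfolding sqnorm_def S_def corr_def red_AB_def red_AC_def red_BC_def outer_def trace_def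
    mprod_def tensor_def pauli_def
  by (simp add: UNIV_bool_triple UNIV_bool_pair UNIV_bool cmod_power2) algebra

lemma L2_set_sum_list_le:
  "L2_set (\<lambda>x. \<Sum>u\<leftarrow>us. f u x) A \<le> (\<Sum>u\<leftarrow>us. L2_set (f u) A)"
proof (induction us)
  case Nil
  then show ?case by (simp add: L2_set_0')
next
  case (Cons v us)
  have "L2_set (\<lambda>x. \<Sum>u\<leftarrow>v # us. f u x) A \<le>
      L2_set (f v) A + L2_set (\<lambda>x. \<Sum>u\<leftarrow>us. f u x) A"
    using L2_set_triangle_ineq by simp
  then show ?case using Cons by simp
qed

lemma L2_set_corr_vec_outer: "L2_set (corr_vec (outer u)) corr_index = sqrt 3 * sqnorm u"
proof -
  have "(L2_set (corr_vec (outer u)) corr_index)\<^sup>2 = (sqrt 3 * sqnorm u)\<^sup>2"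
    using S_sum_eq_L2_set_corr_vec[of "outer u"] S_sum_outer[of u]
    by (simp add: power_mult_distrib)
  moreover have "0 \<le> sqnorm u" unfolding sqnorm_def by (simp add: sum_nonneg)
  ultimately show ?thesis by (simp add: power2_eq_iff_nonneg)
qed

lemma S_sum_le_3:
  assumes "density \<rho>"
  shows "S (red_AB \<rho>) + S (red_AC \<rho>) + S (red_BC \<rho>) \<le> 3"
proof -
  obtain us where us: "\<rho> = (\<lambda>i j. \<Sum>u\<leftarrow>us. outer u i j)"
    using psd_eq_sum_outer assms unfolding density_def by blast
  have "complex_of_real (\<Sum>u\<leftarrow>us. sqnorm u) = trace \<rho>"
    unfolding us trace_sum_list trace_outer by (induction us) simp_all
  then have trace: "(\<Sum>u\<leftarrow>us. sqnorm u) = 1"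
    using assms unfolding density_def by simp
  have "L2_set (corr_vec \<rho>) corr_index =
      L2_set (\<lambda>x. \<Sum>u\<leftarrow>us. corr_vec (outer u) x) corr_index"
    unfolding us corr_vec_sum_list ..
  also have "\<dots> \<le> (\<Sum>u\<leftarrow>us. L2_set (corr_vec (outer u)) corr_index)"
    by (rule L2_set_sum_list_le)
  also have "\<dots> = sqrt 3"
    unfolding L2_set_corr_vec_outer sum_list_const_mult trace by simp
  finally have "(L2_set (corr_vec \<rho>) corr_index)\<^sup>2 \<le> (sqrt 3)\<^sup>2"
    using power_mono L2_set_nonneg by blast
  then show ?thesis unfolding S_sum_eq_L2_set_corr_vec by simp
qed

definition w_vec :: "bool \<times> bool \<times> bool \<Rightarrow> complex" where
  "w_vec x = (if x = (False, True, True) \<or> x = (True, False, True) then 1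
              else if x = (True, True, False) then 2 else 0)"

definition w_state :: "(bool \<times> bool \<times> bool) op" where
  "w_state = (\<lambda>i j. outer w_vec i j / 6)"

lemma density_w_state: "density w_state"
proof -
  have "psd w_state"
    using psd_div[OF psd_outer, of 6 w_vec] unfolding w_state_def by simp
  moreover have "trace w_state = 1"
    unfolding trace_def w_state_def outer_def w_vec_def by (simp add: UNIV_bool_triple)
  ultimately show ?thesis unfolding density_def by blast
qed

lemma S_w_state: "S (red_AC w_state) = 4/3" "S (red_BC w_state) = 4/3"
  unfolding S_def corr_def red_AC_def red_BC_def w_state_def outer_def w_vec_def trace_def
    mprod_def tensor_def pauli_def
  by (simp_all add: UNIV_bool_pair UNIV_bool power2_eq_square)

theorem theorem1:
  shows "(\<forall>\<rho> :: (bool \<times> bool \<times> bool) op. density \<rho> \<longrightarrow>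
            \<not> (S (red_AB \<rho>) > 1 \<and> S (red_AC \<rho>) > 1 \<and> S (red_BC \<rho>) > 1))
       \<and> (\<exists>\<rho> :: (bool \<times> bool \<times> bool) op. density \<rho> \<and>
            ((S (red_AB \<rho>) > 1 \<and> S (red_AC \<rho>) > 1) \<or>
             (S (red_AB \<rho>) > 1 \<and> S (red_BC \<rho>) > 1) \<or>
             (S (red_AC \<rho>) > 1 \<and> S (red_BC \<rho>) > 1)))"
proof
  show "\<forall>\<rho> :: (bool \<times> bool \<times> bool) op. density \<rho> \<longrightarrow>
            \<not> (S (red_AB \<rho>) > 1 \<and> S (red_AC \<rho>) > 1 \<and> S (red_BC \<rho>) > 1)"
    using S_sum_le_3 by fastforce
  show "\<exists>\<rho> :: (bool \<times> bool \<times> bool) op. density \<rho> \<and>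
            ((S (red_AB \<rho>) > 1 \<and> S (red_AC \<rho>) > 1) \<or>
             (S (red_AB \<rho>) > 1 \<and> S (red_BC \<rho>) > 1) \<or>
             (S (red_AC \<rho>) > 1 \<and> S (red_BC \<rho>) > 1))"
    using density_w_state S_w_state by (intro exI[of _ w_state]) simp
qed

end
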